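(* Let $\lambda>0$, $A\in\mathbb{R}^{m\times n}$, $b\in\mathbb{R}^m$, and let $\mathcal{X}\subseteq\mathbb{R}^n$ be a closed hyperrectangle with $0\in\mathcal{X}$. Consider the three problems $\min_{x\in\mathcal{X}}\ \lambda\frac{\|x\|_1^2}{\|x\|_2^2}+q(Ax-b)$ (objective defined for $x\neq0$) with respectively (G) $q(y)=\frac12\|y\|_2^2$; (C) $q(y)=\sum_{i=1}^m\log(1+\gamma^{-2}y_i^2)$ for a fixed $\gamma>0$; (R) $q(y)=\frac12\mathrm{dist}^2(y,S_r)$ with $S_r=\{z\in\mathbb{R}^m:\|z\|_0\le r\}$ for a fixed positive integer $r$; and for each problem assume $\nu^\star<\lambda+q(-b)$, where $\nu^\star$ is the infimum of its objective over $\mathcal{X}\setminus\{0\}$. Then: (i) if $\mathcal{X}$ is bounded, each of the problems (G), (C), (R) has a nonempty set of optimal solutions; (ii) if $m<n$, $\dim\ker A=n-m$, $\ker A$ has the $s$-spherical section property for some $s>0$, and for the respective $q$ there exists $\widetilde{x}\in\mathbb{R}^n$ with $0\neq\widetilde{x}\in\arg\min_{x\in\mathcal{X}}q(Ax-b)$ and $\|\widetilde{x}\|_0<m/s$, then each of problems (G) and (C) has a nonempty set of optimal solutions.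
   Context: A closed hyperrectangle is a set $\{x:\underline{x}\le x\le\overline{x}\}$ with $\underline{x}\in(\mathbb{R}\cup\{-\infty\})^n$, $\overline{x}\in(\mathbb{R}\cup\{+\infty\})^n$. An optimal solution is a point of $\mathcal{X}\setminus\{0\}$ attaining $\nu^\star$. $\|x\|_0$ counts nonzero entries. An $(n-m)$-dimensional subspace $V$ has the $s$-spherical section property if $\inf_{v\in V\setminus\{0\}}\|v\|_1/\|v\|_2\ge\sqrt{m/s}$. The inequality $\nu^\star<\lambda+q(-b)$ is a standing assumption of the paper. *)

theory Defs
  imports "HOL-Analysis.Analysis"
begin

text \<open>Vectors in R^n are modelled as real^'n, R^m as real^'m; A :: real^'n^'m (an m x n matrix).\<close>

definition l1norm :: "real^'n \<Rightarrow> real" where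
  "l1norm x = (\<Sum>i\<in>UNIV. \<bar>x $ i\<bar>)"

definition l0norm :: "real^'n \<Rightarrow> nat" where
  "l0norm x = card {i. x $ i \<noteq> 0}"

text \<open>Closed hyperrectangle with lower bounds in R \<union> {-\<infinity>} and upper bounds in R \<union> {+\<infinity>}.\<close>
definition hyperrect :: "('n \<Rightarrow> ereal) \<Rightarrow> ('n \<Rightarrow> ereal) \<Rightarrow> (real^'n) set" where
  "hyperrect lo hi = {x. \<forall>i. lo i \<le> ereal (x $ i) \<and> ereal (x $ i) \<le> hi i}"

definition is_closed_hyperrect :: "(real^'n) set \<Rightarrow> bool" where
  "is_closed_hyperrect X \<longleftrightarrow> (\<exists>lo hi. (\<forall>i. lo i \<noteq> \<infinity> \<and> hi i \<noteq> -\<infinity>) \<and> X = hyperrect lo hi)"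

definition obj :: "real \<Rightarrow> (real^'m \<Rightarrow> real) \<Rightarrow> real^'n^'m \<Rightarrow> real^'m \<Rightarrow> real^'n \<Rightarrow> real" where
  "obj lam q A b x = lam * (l1norm x ^ 2 / (norm x) ^ 2) + q (A *v x - b)"

definition nu_star :: "real \<Rightarrow> (real^'m \<Rightarrow> real) \<Rightarrow> real^'n^'m \<Rightarrow> real^'m \<Rightarrow> (real^'n) set \<Rightarrow> ereal" where
  "nu_star lam q A b X = (INF x\<in>X - {0}. ereal (obj lam q A b x))"

definition standing_assm :: "real \<Rightarrow> (real^'m \<Rightarrow> real) \<Rightarrow> real^'n^'m \<Rightarrow> real^'m \<Rightarrow> (real^'n) set \<Rightarrow> bool" where
  "standing_assm lam q A b X \<longleftrightarrow> nu_star lam q A b X < ereal (lam + q (- b))"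

definition optimal_solutions :: "real \<Rightarrow> (real^'m \<Rightarrow> real) \<Rightarrow> real^'n^'m \<Rightarrow> real^'m \<Rightarrow> (real^'n) set \<Rightarrow> (real^'n) set" where
  "optimal_solutions lam q A b X = {x \<in> X - {0}. ereal (obj lam q A b x) = nu_star lam q A b X}"

definition qG :: "real^'m \<Rightarrow> real" where
  "qG y = (1/2) * (norm y) ^ 2"

definition qC :: "real \<Rightarrow> real^'m \<Rightarrow> real" where
  "qC \<gamma> y = (\<Sum>i\<in>UNIV. ln (1 + (y $ i) ^ 2 / \<gamma> ^ 2))"

definition sparse_set :: "nat \<Rightarrow> (real^'m) set" where
  "sparse_set r = {z. l0norm z \<le> r}"

definition qR :: "nat \<Rightarrow> real^'m \<Rightarrow> real" where
  "qR r y = (1/2) * (infdist y (sparse_set r)) ^ 2"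

definition spherical_section :: "real \<Rightarrow> nat \<Rightarrow> (real^'n) set \<Rightarrow> bool" where
  "spherical_section s m V \<longleftrightarrow>
     Inf ((\<lambda>v. l1norm v / norm v) ` (V - {0})) \<ge> sqrt (real m / s)"

definition argmin_on :: "(real^'n \<Rightarrow> real) \<Rightarrow> (real^'n) set \<Rightarrow> (real^'n) set" where
  "argmin_on f X = {x \<in> X. \<forall>y\<in>X. f x \<le> f y}"

end

theory Submission imports Defs begin

(* With rho x = ||x||_1^2 / ||x||_2^2 >= 1 the objective is lam * rho x + q (A x - b). Near 0 it is
   roughly at least lam + q (-b), which by the standing assumption exceeds its value at some
   feasible point; if it also exceeds the value at some feasible point far out, it attains its
   infimum on a compact annulus of X. Far out is vacuous for bounded X. Otherwise take the sparse
   minimizer x~ of the data term: rho x~ <= ||x~||_0 < m/s <= rho d for every nonzero d in ker A,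
   so by compactness of the unit sphere A is bounded below on the cone {y. rho y <= rho x~}. On
   that cone the coercivity of q makes the objective large far out; off it, both terms of the
   objective dominate those at x~. *)

lemma norm_sq_eq_sum_components: "norm (x::real^'n) ^ 2 = (\<Sum>i\<in>UNIV. (x $ i) ^ 2)"
  unfolding power2_norm_eq_inner inner_vec_def by (simp add: power2_eq_square)

lemma l1norm_nonneg: "0 \<le> l1norm x"
  unfolding l1norm_def by (simp add: sum_nonneg)

lemma norm_le_l1norm: "norm x \<le> l1norm x"
  unfolding l1norm_def by (rule norm_le_l1_cart)

lemma l1norm_scaleR: "l1norm (c *\<^sub>R x) = \<bar>c\<bar> * l1norm x"
  unfolding l1norm_def by (simp add: abs_mult sum_distrib_left)

lemma continuous_on_l1norm: "continuous_on S l1norm"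
  unfolding l1norm_def by (intro continuous_intros)

lemma l1norm_sq_le_l0norm: "l1norm x ^ 2 \<le> real (l0norm x) * norm x ^ 2"
proof -
  let ?S = "{i. x $ i \<noteq> 0}"
  have "l1norm x = (\<Sum>i\<in>?S. \<bar>x $ i\<bar> * 1)"
    unfolding l1norm_def by (simp, rule sum.mono_neutral_right) auto
  then have "l1norm x ^ 2 \<le> (\<Sum>i\<in>?S. \<bar>x $ i\<bar> ^ 2) * (\<Sum>i\<in>?S. 1 ^ 2)"
    using Cauchy_Schwarz_ineq_sum[of "\<lambda>i. \<bar>x $ i\<bar>" "\<lambda>_. 1" ?S] by simp
  also have "(\<Sum>i\<in>?S. \<bar>x $ i\<bar> ^ 2) = norm x ^ 2"
    unfolding norm_sq_eq_sum_components power2_abs by (rule sum.mono_neutral_left) auto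
  also have "(\<Sum>i\<in>?S. 1 ^ 2) = real (l0norm x)"
    unfolding l0norm_def by simp
  finally show ?thesis by (simp add: mult.commute)
qed

definition l1_l2_ratio_sq :: "real^'n \<Rightarrow> real" where
  "l1_l2_ratio_sq x = l1norm x ^ 2 / norm x ^ 2"

lemma obj_eq_l1_l2_ratio_sq: "obj lam q A b x = lam * l1_l2_ratio_sq x + q (A *v x - b)"
  unfolding obj_def l1_l2_ratio_sq_def by simp

lemma l1_l2_ratio_sq_nonneg: "0 \<le> l1_l2_ratio_sq x"
  unfolding l1_l2_ratio_sq_def by simp

lemma l1_l2_ratio_sq_ge_1: "x \<noteq> 0 \<Longrightarrow> 1 \<le> l1_l2_ratio_sq x"
  unfolding l1_l2_ratio_sq_def using norm_le_l1norm[of x] by (simp add: power_mono)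

lemma l1_l2_ratio_sq_le_l0norm: "l1_l2_ratio_sq x \<le> real (l0norm x)"
  unfolding l1_l2_ratio_sq_def using l1norm_sq_le_l0norm[of x]
  by (cases "x = 0") (auto simp: divide_le_eq l0norm_def)

lemma l1_l2_ratio_sq_scaleR: "c \<noteq> 0 \<Longrightarrow> l1_l2_ratio_sq (c *\<^sub>R x) = l1_l2_ratio_sq x"
  unfolding l1_l2_ratio_sq_def l1norm_scaleR by (simp add: power_mult_distrib)

lemma continuous_on_l1_l2_ratio_sq: "continuous_on (S - {0}) l1_l2_ratio_sq"
  unfolding l1_l2_ratio_sq_def by (intro continuous_intros continuous_on_l1norm) auto

lemma spherical_section_imp_l1_l2_ratio_sq_ge:
  assumes "spherical_section s m V" and "0 < s" and "v \<in> V" and "v \<noteq> 0"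
  shows "real m / s \<le> l1_l2_ratio_sq v"
proof -
  let ?S = "(\<lambda>v. l1norm v / norm v) ` (V - {0})"
  have "bdd_below ?S"
    by (rule bdd_belowI[of _ 0]) (auto intro: divide_nonneg_nonneg l1norm_nonneg)
  then have "Inf ?S \<le> l1norm v / norm v"
    using assms(3,4) by (intro cInf_lower) auto
  then have "sqrt (real m / s) \<le> l1norm v / norm v"
    using assms(1) unfolding spherical_section_def by linarith
  then have "sqrt (real m / s) ^ 2 \<le> (l1norm v / norm v) ^ 2"
    using assms(2) by (intro power_mono) auto
  then show ?thesis
    using assms(2) unfolding l1_l2_ratio_sq_def by (simp add: power_divide)
qed

lemma closed_hyperrect: "closed (hyperrect lo hi)"
  unfolding hyperrect_def
  by (intro closed_Collect_all closed_Collect_conj closed_Collect_le continuous_intros)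

lemma continuous_on_data_term:
  fixes A :: "real^'n^'m"
  assumes "continuous_on UNIV q"
  shows "continuous_on S (\<lambda>x. q (A *v x - b))"
proof -
  have "continuous_on S (\<lambda>x. A *v x - b)"
    by (intro continuous_intros linear_continuous_on matrix_vector_mul_linear)
  then show ?thesis by (rule continuous_on_compose2[OF assms]) auto
qed

lemma continuous_on_obj:
  assumes "continuous_on UNIV q"
  shows "continuous_on (X - {0}) (obj lam q A b)"
  unfolding obj_eq_l1_l2_ratio_sq
  by (intro continuous_intros continuous_on_l1_l2_ratio_sq continuous_on_data_term[OF assms])

lemma minimizer_in_optimal_solutions:
  assumes "x \<in> X - {0}" and "\<And>y. y \<in> X - {0} \<Longrightarrow> obj lam q A b x \<le> obj lam q A b y"
  shows "x \<in> optimal_solutions lam q A b X"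
proof -
  have "nu_star lam q A b X = ereal (obj lam q A b x)"
    unfolding nu_star_def
    by (intro antisym INF_lower2[OF assms(1)] INF_greatest) (simp_all add: assms(2))
  with assms(1) show ?thesis unfolding optimal_solutions_def by auto
qed

lemma continuous_attains_inf_punctured:
  fixes f :: "'a::{real_normed_vector, heine_borel} \<Rightarrow> real"
  assumes "closed X" and "continuous_on (X - {0}) f"
    and "z_near \<in> X - {0}" and "0 < \<delta>"
    and "\<And>y. y \<in> X - {0} \<Longrightarrow> norm y < \<delta> \<Longrightarrow> f z_near \<le> f y"
    and "z_far \<in> X - {0}" and "\<And>y. y \<in> X \<Longrightarrow> R < norm y \<Longrightarrow> f z_far \<le> f y"
  obtains x where "x \<in> X - {0}" and "\<And>y. y \<in> X - {0} \<Longrightarrow> f x \<le> f y"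
proof -
  define K where "K = insert z_near (insert z_far (X \<inter> {x. \<delta> \<le> norm x \<and> norm x \<le> R}))"
  have "compact (X \<inter> {x. \<delta> \<le> norm x \<and> norm x \<le> R})"
    using assms(1) unfolding compact_eq_bounded_closed bounded_iff
    by (intro conjI closed_Int closed_Collect_conj closed_Collect_le continuous_intros) auto
  then have "compact K"
    unfolding K_def by simp
  moreover have K: "K \<subseteq> X - {0}"
    unfolding K_def using assms(3,4,6) by auto
  ultimately obtain x where x: "x \<in> K" "\<And>y. y \<in> K \<Longrightarrow> f x \<le> f y"
    using continuous_attains_inf[of K f] continuous_on_subset[OF assms(2)]
    unfolding K_def by blast
  have "f x \<le> f y" if "y \<in> X - {0}" for y
  proof (cases "\<delta> \<le> norm y \<and> norm y \<le> R")
    case True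
    then show ?thesis using x that unfolding K_def by auto
  next
    case False
    then have "f z_near \<le> f y \<or> f z_far \<le> f y"
      using assms(5,7) that by force
    moreover have "f x \<le> f z_near" "f x \<le> f z_far"
      using x unfolding K_def by auto
    ultimately show ?thesis by linarith
  qed
  with that x K show ?thesis by blast
qed

lemma standing_assm_near_zero:
  assumes "0 \<le> lam" and "continuous_on UNIV q" and "standing_assm lam q A b X"
  obtains x\<^sub>0 \<delta> where "x\<^sub>0 \<in> X - {0}" and "0 < \<delta>"
    and "\<And>y. y \<in> X - {0} \<Longrightarrow> norm y < \<delta> \<Longrightarrow> obj lam q A b x\<^sub>0 \<le> obj lam q A b y"
proof -
  obtain x\<^sub>0 where x\<^sub>0: "x\<^sub>0 \<in> X - {0}" "obj lam q A b x\<^sub>0 < lam + q (- b)"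
    using assms(3) unfolding standing_assm_def nu_star_def INF_less_iff by auto
  have "isCont (\<lambda>y. q (A *v y - b)) 0"
    using continuous_on_data_term[OF assms(2), of UNIV A b]
    by (simp add: continuous_on_eq_continuous_at)
  then have "\<forall>\<^sub>F y in at 0. obj lam q A b x\<^sub>0 - lam < q (A *v y - b)"
    using x\<^sub>0(2) unfolding isCont_def by (intro order_tendstoD) auto
  then obtain \<delta> where "0 < \<delta>"
    and \<delta>: "\<And>y. y \<noteq> 0 \<Longrightarrow> norm y < \<delta> \<Longrightarrow> obj lam q A b x\<^sub>0 - lam < q (A *v y - b)"
    unfolding eventually_at dist_norm by auto
  have "obj lam q A b x\<^sub>0 \<le> obj lam q A b y" if "y \<in> X - {0}" "norm y < \<delta>" for y
  proof -
    have "lam \<le> lam * l1_l2_ratio_sq y"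
      using l1_l2_ratio_sq_ge_1[of y] that assms(1) by (simp add: mult_le_cancel_left1)
    with \<delta>[of y] that show ?thesis unfolding obj_eq_l1_l2_ratio_sq[of lam q A b y] by auto
  qed
  with that x\<^sub>0(1) \<open>0 < \<delta>\<close> show ?thesis by blast
qed

lemma optimal_solutions_nonempty:
  assumes "0 \<le> lam" and "continuous_on UNIV q" and "closed X" and "standing_assm lam q A b X"
    and "z \<in> X - {0}" and "\<And>y. y \<in> X \<Longrightarrow> R < norm y \<Longrightarrow> obj lam q A b z \<le> obj lam q A b y"
  shows "optimal_solutions lam q A b X \<noteq> {}"
proof -
  obtain x\<^sub>0 \<delta> where "x\<^sub>0 \<in> X - {0}" "0 < \<delta>"
    and "\<And>y. y \<in> X - {0} \<Longrightarrow> norm y < \<delta> \<Longrightarrow> obj lam q A b x\<^sub>0 \<le> obj lam q A b y"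
    using standing_assm_near_zero[OF assms(1,2,4)] by blast
  then obtain x where "x \<in> X - {0}" "\<And>y. y \<in> X - {0} \<Longrightarrow> obj lam q A b x \<le> obj lam q A b y"
    using continuous_attains_inf_punctured[OF assms(3) continuous_on_obj[OF assms(2)] _ _ _
        assms(5,6)] by blast
  then show ?thesis
    using minimizer_in_optimal_solutions by blast
qed

lemma optimal_solutions_nonempty_if_bounded:
  assumes "0 \<le> lam" and "continuous_on UNIV q" and "closed X" and "bounded X"
    and "standing_assm lam q A b X"
  shows "optimal_solutions lam q A b X \<noteq> {}"
proof -
  obtain z where "z \<in> X - {0}"
    using assms(5) unfolding standing_assm_def nu_star_def INF_less_iff by auto
  moreover obtain R where "\<And>y. y \<in> X \<Longrightarrow> norm y \<le> R"
    using assms(4) unfolding bounded_iff by auto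
  ultimately show ?thesis
    using optimal_solutions_nonempty[OF assms(1,2,3,5), of z R] by force
qed

lemma linear_bounded_below_on_l1_l2_ratio_sq_sublevel:
  fixes f :: "real^'n \<Rightarrow> 'b::real_normed_vector"
  assumes "linear f" and "\<And>d. f d = 0 \<Longrightarrow> d \<noteq> 0 \<Longrightarrow> \<rho> < l1_l2_ratio_sq d"
  obtains \<alpha> where "0 < \<alpha>" and "\<And>y. l1_l2_ratio_sq y \<le> \<rho> \<Longrightarrow> \<alpha> * norm y \<le> norm (f y)"
proof -
  define D where "D = sphere (0::real^'n) 1 \<inter> l1_l2_ratio_sq -` {..\<rho>}"
  have "closed D"
    unfolding D_def
    by (intro continuous_closed_preimage continuous_on_subset[OF continuous_on_l1_l2_ratio_sq]) auto
  then have "compact D"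
    unfolding D_def by (simp add: compact_eq_bounded_closed bounded_Int)
  have "continuous_on D (\<lambda>d. norm (f d))"
    using assms(1)
    by (intro continuous_intros linear_continuous_on) (simp add: linear_conv_bounded_linear)
  obtain \<alpha> where "0 < \<alpha>" and \<alpha>: "\<And>d. d \<in> D \<Longrightarrow> \<alpha> \<le> norm (f d)"
  proof (cases "D = {}")
    case False
    then obtain d\<^sub>0 where "d\<^sub>0 \<in> D" and d\<^sub>0: "\<And>d. d \<in> D \<Longrightarrow> norm (f d\<^sub>0) \<le> norm (f d)"
      using continuous_attains_inf[OF \<open>compact D\<close> _ \<open>continuous_on D _\<close>] by blast
    moreover have "f d\<^sub>0 \<noteq> 0"
      using assms(2)[of d\<^sub>0] \<open>d\<^sub>0 \<in> D\<close> unfolding D_def by force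
    ultimately show ?thesis using that[of "norm (f d\<^sub>0)"] by auto
  qed (use that[of 1] in auto)
  have "\<alpha> * norm y \<le> norm (f y)" if "l1_l2_ratio_sq y \<le> \<rho>" for y
  proof (cases "y = 0")
    case False
    define d where "d = (1 / norm y) *\<^sub>R y"
    have "d \<in> D"
      using False that unfolding d_def D_def by (simp add: l1_l2_ratio_sq_scaleR)
    moreover have "f y = norm y *\<^sub>R f d"
      using False assms(1) unfolding d_def by (simp add: linear_scale)
    ultimately show ?thesis
      using \<alpha>[of d] mult_right_mono[of \<alpha> "norm (f d)" "norm y"] by (simp add: mult.commute)
  qed (simp add: linear_0[OF assms(1)])
  with that \<open>0 < \<alpha>\<close> show ?thesis by blast
qed

lemma argmin_obj_le_far:
  fixes q :: "real^'m \<Rightarrow> real" and A :: "real^'n^'m"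
  assumes "0 \<le> lam" and "filterlim q at_top at_infinity"
    and "x \<in> argmin_on (\<lambda>x. q (A *v x - b)) X"
    and "\<And>d. A *v d = 0 \<Longrightarrow> d \<noteq> 0 \<Longrightarrow> l1_l2_ratio_sq x < l1_l2_ratio_sq d"
  obtains R where "\<And>y. y \<in> X \<Longrightarrow> R < norm y \<Longrightarrow> obj lam q A b x \<le> obj lam q A b y"
proof -
  obtain \<alpha> where "0 < \<alpha>"
    and \<alpha>: "\<And>y. l1_l2_ratio_sq y \<le> l1_l2_ratio_sq x \<Longrightarrow> \<alpha> * norm y \<le> norm (A *v y)"
    using linear_bounded_below_on_l1_l2_ratio_sq_sublevel[OF matrix_vector_mul_linear assms(4)]
    by blast
  obtain M where M: "\<And>z. M \<le> norm z \<Longrightarrow> obj lam q A b x \<le> q z"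
    using assms(2) unfolding filterlim_at_top eventually_at_infinity by blast
  have "obj lam q A b x \<le> obj lam q A b y" if "y \<in> X" "(\<bar>M\<bar> + norm b) / \<alpha> < norm y" for y
  proof (cases "l1_l2_ratio_sq y \<le> l1_l2_ratio_sq x")
    case True
    have "\<bar>M\<bar> + norm b < \<alpha> * norm y"
      using that(2) \<open>0 < \<alpha>\<close> by (simp add: field_simps)
    also have "\<dots> \<le> norm (A *v y - b) + norm b"
      using \<alpha>[OF True] norm_triangle_ineq2[of "A *v y" b] by linarith
    finally have "obj lam q A b x \<le> q (A *v y - b)"
      by (intro M) linarith
    then show ?thesis
      using mult_nonneg_nonneg[OF assms(1) l1_l2_ratio_sq_nonneg[of y]]
      unfolding obj_eq_l1_l2_ratio_sq[of lam q A b y] by linarith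
  next
    case False
    then have "lam * l1_l2_ratio_sq x \<le> lam * l1_l2_ratio_sq y"
      using assms(1) by (intro mult_left_mono) auto
    moreover have "q (A *v x - b) \<le> q (A *v y - b)"
      using assms(3) that(1) unfolding argmin_on_def by blast
    ultimately show ?thesis unfolding obj_eq_l1_l2_ratio_sq by linarith
  qed
  with that show ?thesis by blast
qed

lemma optimal_solutions_nonempty_if_spherical_section:
  fixes q :: "real^'m \<Rightarrow> real" and A :: "real^'n^'m"
  assumes "0 \<le> lam" and "continuous_on UNIV q" and "filterlim q at_top at_infinity"
    and "closed X" and "standing_assm lam q A b X"
    and "0 < s" and "spherical_section s CARD('m) {x. A *v x = 0}"
    and "x \<noteq> 0" and "x \<in> argmin_on (\<lambda>x. q (A *v x - b)) X"
    and "real (l0norm x) < real CARD('m) / s"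
  shows "optimal_solutions lam q A b X \<noteq> {}"
proof -
  have "l1_l2_ratio_sq x < l1_l2_ratio_sq d" if "A *v d = 0" "d \<noteq> 0" for d
    using l1_l2_ratio_sq_le_l0norm[of x] assms(10)
      spherical_section_imp_l1_l2_ratio_sq_ge[OF assms(7,6), of d] that by simp
  then obtain R where "\<And>y. y \<in> X \<Longrightarrow> R < norm y \<Longrightarrow> obj lam q A b x \<le> obj lam q A b y"
    using argmin_obj_le_far[OF assms(1,3,9)] by blast
  moreover have "x \<in> X - {0}"
    using assms(8,9) unfolding argmin_on_def by blast
  ultimately show ?thesis
    using optimal_solutions_nonempty[OF assms(1,2,4,5)] by blast
qed

lemma continuous_on_qG: "continuous_on UNIV qG"
  unfolding qG_def by (intro continuous_intros)

lemma continuous_on_qC: "continuous_on UNIV (qC \<gamma>)"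
  unfolding qC_def divide_inverse by (intro continuous_intros) (auto simp: add_nonneg_eq_0_iff)

lemma continuous_on_qR: "continuous_on UNIV (qR r)"
  unfolding qR_def by (intro continuous_intros)

lemma qG_at_infinity: "filterlim qG at_top at_infinity"
  unfolding qG_def
  by (intro filterlim_tendsto_pos_mult_at_top[OF tendsto_const] filterlim_pow_at_top
      filterlim_norm_at_top) auto

lemma ln_norm_le_qC:
  assumes "\<gamma> \<noteq> 0" and "y \<noteq> 0"
  shows "ln (norm y ^ 2 / \<gamma> ^ 2) \<le> qC \<gamma> y"
proof -
  have "norm y ^ 2 / \<gamma> ^ 2 = (\<Sum>i\<in>UNIV. (y $ i) ^ 2 / \<gamma> ^ 2)"
    unfolding norm_sq_eq_sum_components by (simp add: sum_divide_distrib)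
  also have "\<dots> \<le> (\<Prod>i\<in>UNIV. 1 + (y $ i) ^ 2 / \<gamma> ^ 2)"
    by (rule sum_le_prod) simp
  finally have "ln (norm y ^ 2 / \<gamma> ^ 2) \<le> ln (\<Prod>i\<in>UNIV. 1 + (y $ i) ^ 2 / \<gamma> ^ 2)"
    using assms by (intro ln_mono) auto
  also have "\<dots> = qC \<gamma> y"
    unfolding qC_def by (subst ln_prod) (auto simp: add_nonneg_eq_0_iff)
  finally show ?thesis .
qed

lemma qC_at_infinity:
  assumes "\<gamma> \<noteq> 0"
  shows "filterlim (qC \<gamma>) at_top at_infinity"
proof (rule filterlim_at_top_mono)
  have "filterlim (\<lambda>y::real^'m. 1 / \<gamma> ^ 2 * norm y ^ 2) at_top at_infinity"
    using assms by (intro filterlim_tendsto_pos_mult_at_top[OF tendsto_const] filterlim_pow_at_top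
        filterlim_norm_at_top) auto
  then show "filterlim (\<lambda>y::real^'m. ln (norm y ^ 2 / \<gamma> ^ 2)) at_top at_infinity"
    by (intro filterlim_compose[OF ln_at_top]) simp
  show "\<forall>\<^sub>F y in at_infinity. ln (norm y ^ 2 / \<gamma> ^ 2) \<le> qC \<gamma> y"
    unfolding eventually_at_infinity using assms by (auto intro!: exI[of _ 1] ln_norm_le_qC)
qed

theorem corollary3p1:
  fixes lam \<gamma> :: real and r :: nat
    and A :: "real^'n^'m" and b :: "real^'m" and X :: "(real^'n) set"
  assumes lam: "lam > 0" and gam: "\<gamma> > 0" and r: "r \<ge> 1"
    and X: "is_closed_hyperrect X" and X0: "0 \<in> X"
  shows
   "(bounded X \<longrightarrow>
       (standing_assm lam qG A b X \<longrightarrow> optimal_solutions lam qG A b X \<noteq> {}) \<and>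
       (standing_assm lam (qC \<gamma>) A b X \<longrightarrow> optimal_solutions lam (qC \<gamma>) A b X \<noteq> {}) \<and>
       (standing_assm lam (qR r) A b X \<longrightarrow> optimal_solutions lam (qR r) A b X \<noteq> {}))
    \<and>
    (\<forall>s>0. CARD('m) < CARD('n) \<and> dim {x. A *v x = 0} = CARD('n) - CARD('m)
        \<and> spherical_section s CARD('m) {x. A *v x = 0} \<longrightarrow>
       (standing_assm lam qG A b X \<and>
          (\<exists>xt. xt \<noteq> 0 \<and> xt \<in> argmin_on (\<lambda>x. qG (A *v x - b)) X
                \<and> real (l0norm xt) < real CARD('m) / s)
          \<longrightarrow> optimal_solutions lam qG A b X \<noteq> {}) \<and>
       (standing_assm lam (qC \<gamma>) A b X \<and>
          (\<exists>xt. xt \<noteq> 0 \<and> xt \<in> argmin_on (\<lambda>x. qC \<gamma> (A *v x - b)) X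
                \<and> real (l0norm xt) < real CARD('m) / s)
          \<longrightarrow> optimal_solutions lam (qC \<gamma>) A b X \<noteq> {}))"
proof -
  have "closed X"
    using X closed_hyperrect unfolding is_closed_hyperrect_def by blast
  note nonempty_if_bounded = optimal_solutions_nonempty_if_bounded[OF less_imp_le[OF lam] _ this]
  note nonempty_if_spherical_section =
    optimal_solutions_nonempty_if_spherical_section[OF less_imp_le[OF lam] _ _ \<open>closed X\<close>]
  have "continuous_on UNIV (qC \<gamma>)" and "filterlim (qC \<gamma>) at_top at_infinity"
    using gam by (simp_all add: continuous_on_qC qC_at_infinity)
  then show ?thesis
    using continuous_on_qG qG_at_infinity continuous_on_qR
    by (intro conjI impI allI; (elim conjE exE)?)
      (assumption | rule nonempty_if_bounded nonempty_if_spherical_section)+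
qed

end
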